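(* Let $m\ge2$ be an integer. Every element $q$ of $\mathbb{Q}_m$ can be represented as $q=\sum_{k=0}^\infty \left(\frac{m}{m+1}\right)^k s_k$ (convergence in $\mathbb{Q}_m$) for a unique sequence $\{s_k\}_{k\ge0}$ with each $s_k\in\{0,1,\dots,m-1\}$.
   Context: $D_m$ is the set of rationals $a/b$ (with $a,b$ coprime integers) such that $\gcd(b,m)=1$; it is a subring of $\mathbb{Q}$ containing $\frac{m}{m+1}$. For $a/b\in D_m$ in lowest terms, $|a/b|_m=m^{-k}$ where $k$ is the largest integer with $m^k\mid a$, and $|0|_m=0$; the metric is $d(u,v)=|u-v|_m$, making $D_m$ a topological ring. $\mathbb{Q}_m$ is the Cauchy completion of $(D_m,d)$, with ring operations and the norm extended by continuity; $D_m$ is identified with its image in $\mathbb{Q}_m$. *)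

theory Defs
  imports Complex_Main
begin

definition Dm :: "nat \<Rightarrow> rat set" where
  "Dm m = {r. coprime (snd (quotient_of r)) (int m)}"

definition mnorm :: "nat \<Rightarrow> rat \<Rightarrow> real" where
  "mnorm m r = (if r = 0 then 0
     else 1 / real m ^ (GREATEST k. (int m) ^ k dvd fst (quotient_of r)))"

definition mcauchy :: "nat \<Rightarrow> (nat \<Rightarrow> rat) \<Rightarrow> bool" where
  "mcauchy m X \<longleftrightarrow> (\<forall>n. X n \<in> Dm m) \<and>
     (\<forall>e>0. \<exists>N. \<forall>i\<ge>N. \<forall>j\<ge>N. mnorm m (X i - X j) < e)"

definition Qm_class :: "nat \<Rightarrow> (nat \<Rightarrow> rat) \<Rightarrow> (nat \<Rightarrow> rat) set" where
  "Qm_class m X = {Y. mcauchy m Y \<and> (\<lambda>n. mnorm m (X n - Y n)) \<longlonglongrightarrow> 0}"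

definition Qm :: "nat \<Rightarrow> (nat \<Rightarrow> rat) set set" where
  "Qm m = Qm_class m ` {X. mcauchy m X}"

definition Qm_of :: "nat \<Rightarrow> rat \<Rightarrow> (nat \<Rightarrow> rat) set" where
  "Qm_of m r = Qm_class m (\<lambda>_. r)"

definition Qm_dist :: "nat \<Rightarrow> (nat \<Rightarrow> rat) set \<Rightarrow> (nat \<Rightarrow> rat) set \<Rightarrow> real" where
  "Qm_dist m a b = lim (\<lambda>n. mnorm m ((SOME X. X \<in> a) n - (SOME Y. Y \<in> b) n))"

end

theory Submission
  imports Defs
begin

text \<open>Write \<open>r = m/(m+1)\<close>; it lies in \<open>m D\<^sub>m\<close>. Every \<open>x \<in> D\<^sub>m\<close> is congruent modulo \<open>m\<close> to a unique
  digit \<open>d \<in> {0..m-1}\<close>, and \<open>x = d + r T x\<close> with \<open>T x \<in> D\<^sub>m\<close>. Iterating, \<open>x\<close> minus the \<open>n\<close>-th partial sum of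
  its digit series is \<open>r\<^sup>n T\<^sup>n x \<in> m\<^sup>n D\<^sub>m\<close>, and elements congruent modulo \<open>m\<^sup>n\<close> have the same first \<open>n\<close>
  digits. For \<open>q \<in> \<rat>\<^sub>m\<close> given by a Cauchy sequence, the first \<open>n\<close> digits of its terms are eventually
  constant; the limiting digits form a series converging to \<open>q\<close>. Conversely, a digit series
  reproduces its own digits, so two digit series with the same limit agree modulo every \<open>m\<^sup>k\<^sup>+\<^sup>1\<close>
  and hence have the same \<open>k\<close>-th digit.\<close>

section \<open>Divisibility by powers of \<open>m\<close> in \<open>D\<^sub>m\<close>\<close>

text \<open>\<open>mpow_dvd m k x\<close> means \<open>x \<in> m\<^sup>k D\<^sub>m\<close>.\<close>
definition mpow_dvd :: "nat \<Rightarrow> nat \<Rightarrow> rat \<Rightarrow> bool" where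
  "mpow_dvd m k x \<longleftrightarrow>
     (\<exists>a b. b > 0 \<and> coprime b (int m) \<and> x = of_int a / of_int b \<and> int m ^ k dvd a)"

abbreviation ratio :: "nat \<Rightarrow> rat" where
  "ratio m \<equiv> of_nat m / (of_nat m + 1)"

lemma mpow_dvd_mono: "mpow_dvd m k x \<Longrightarrow> j \<le> k \<Longrightarrow> mpow_dvd m j x"
  unfolding mpow_dvd_def using le_imp_power_dvd dvd_trans by blast

lemma mpow_dvd_add:
  assumes "mpow_dvd m k x" "mpow_dvd m k y"
  shows "mpow_dvd m k (x + y)"
proof -
  obtain a b c d where
    "b > 0" "coprime b (int m)" "x = of_int a / of_int b" "int m ^ k dvd a"
    "d > 0" "coprime d (int m)" "y = of_int c / of_int d" "int m ^ k dvd c"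
    using assms unfolding mpow_dvd_def by blast
  then show ?thesis
    unfolding mpow_dvd_def
    by (intro exI[of _ "a * d + c * b"] exI[of _ "b * d"]) (simp add: add_frac_eq)
qed

lemma mpow_dvd_mult:
  assumes "mpow_dvd m j x" "mpow_dvd m l y"
  shows "mpow_dvd m (j + l) (x * y)"
proof -
  obtain a b c d where
    "b > 0" "coprime b (int m)" "x = of_int a / of_int b" "int m ^ j dvd a"
    "d > 0" "coprime d (int m)" "y = of_int c / of_int d" "int m ^ l dvd c"
    using assms unfolding mpow_dvd_def by blast
  then show ?thesis
    unfolding mpow_dvd_def
    by (intro exI[of _ "a * c"] exI[of _ "b * d"]) (simp add: power_add mult_dvd_mono)
qed

lemma mpow_dvd_of_int_iff: "mpow_dvd m k (of_int c) \<longleftrightarrow> int m ^ k dvd c"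
proof
  assume "mpow_dvd m k (of_int c)"
  then obtain a b where
    "b > 0" "coprime b (int m)" "(of_int c :: rat) = of_int a / of_int b" "int m ^ k dvd a"
    unfolding mpow_dvd_def by blast
  then have "int m ^ k dvd c * b" "coprime (int m ^ k) b"
    by (simp_all add: field_simps coprime_commute flip: of_int_mult)
  then show "int m ^ k dvd c"
    using coprime_dvd_mult_left_iff by blast
next
  assume "int m ^ k dvd c"
  then show "mpow_dvd m k (of_int c)"
    unfolding mpow_dvd_def by (intro exI[of _ c] exI[of _ 1]) simp
qed

lemma mpow_dvd_of_nat: "mpow_dvd m 0 (of_nat c)"
  using mpow_dvd_of_int_iff[of m 0 "int c"] by simp

lemma mpow_dvd_0: "mpow_dvd m k 0"
  using mpow_dvd_of_int_iff[of m k 0] by simp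

lemma mpow_dvd_uminus: "mpow_dvd m k x \<Longrightarrow> mpow_dvd m k (- x)"
  using mpow_dvd_mult[of m 0 "-1" k x] mpow_dvd_of_int_iff[of m 0 "-1"] by simp

lemma mpow_dvd_diff: "mpow_dvd m k x \<Longrightarrow> mpow_dvd m k y \<Longrightarrow> mpow_dvd m k (x - y)"
  using mpow_dvd_add[of m k x "- y"] mpow_dvd_uminus by simp

lemma mpow_dvd_sum:
  "(\<And>i. i \<in> A \<Longrightarrow> mpow_dvd m k (f i)) \<Longrightarrow> mpow_dvd m k (\<Sum>i\<in>A. f i)"
  by (induction A rule: infinite_finite_induct) (auto intro: mpow_dvd_add mpow_dvd_0)

lemma mpow_dvd_divide_m:
  assumes "m > 0" "mpow_dvd m (Suc k) x"
  shows "mpow_dvd m k (x / of_nat m)"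
proof -
  obtain a b e where "b > 0" "coprime b (int m)" "x = of_int a / of_int b" "a = int m ^ Suc k * e"
    using assms(2) unfolding mpow_dvd_def by blast
  with assms(1) show ?thesis
    unfolding mpow_dvd_def by (intro exI[of _ "int m ^ k * e"] exI[of _ b]) (auto simp: field_simps)
qed

lemma mpow_dvd_ratio_power: "mpow_dvd m k (ratio m ^ k)"
  unfolding mpow_dvd_def
  by (intro exI[of _ "int m ^ k"] exI[of _ "(int m + 1) ^ k"]) (simp add: power_divide)

section \<open>The \<open>m\<close>-adic norm\<close>

lemma quotient_of_common_factor:
  assumes "b > 0" "x = of_int a / of_int b" "quotient_of x = (a', b')"
  shows "\<exists>c. b = b' * c \<and> a = a' * c"
proof -
  have b': "b' > 0" "coprime a' b'" "x = of_int a' / of_int b'"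
    using quotient_of_denom_pos quotient_of_coprime quotient_of_div assms(3) by blast+
  then have eq: "a * b' = a' * b"
    using assms(1,2) by (simp add: frac_eq_eq flip: of_int_mult of_int_eq_iff)
  then have "b' dvd b"
    using b'(2) by (metis coprime_commute coprime_dvd_mult_right_iff dvd_triv_right)
  then obtain c where c: "b = b' * c" ..
  with eq have "b' * a = b' * (a' * c)"
    by (simp add: algebra_simps)
  with b'(1) have "a = a' * c"
    by simp
  with c show ?thesis by blast
qed

lemma mpow_dvd_iff_numerator:
  assumes "quotient_of x = (a, b)"
  shows "mpow_dvd m k x \<longleftrightarrow> coprime b (int m) \<and> int m ^ k dvd a"
proof
  assume "mpow_dvd m k x"
  then obtain a0 b0 where
    h: "b0 > 0" "coprime b0 (int m)" "x = of_int a0 / of_int b0" "int m ^ k dvd a0"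
    unfolding mpow_dvd_def by blast
  then obtain c where c: "b0 = b * c" "a0 = a * c"
    using quotient_of_common_factor[OF h(1,3) assms] by blast
  then have "coprime (int m ^ k) c"
    using h(2) by (simp add: coprime_commute)
  then show "coprime b (int m) \<and> int m ^ k dvd a"
    using h(2,4) c by (simp add: coprime_dvd_mult_left_iff)
next
  assume "coprime b (int m) \<and> int m ^ k dvd a"
  then show "mpow_dvd m k x"
    unfolding mpow_dvd_def using quotient_of_div[OF assms] quotient_of_denom_pos[OF assms] by blast
qed

lemma Dm_iff_mpow_dvd: "x \<in> Dm m \<longleftrightarrow> mpow_dvd m 0 x"
  by (cases "quotient_of x") (simp add: Dm_def mpow_dvd_iff_numerator)

lemma mpow_dvd_Dm: "mpow_dvd m k x \<Longrightarrow> x \<in> Dm m"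
  using Dm_iff_mpow_dvd mpow_dvd_mono by blast

lemma Dm_diff: "x \<in> Dm m \<Longrightarrow> y \<in> Dm m \<Longrightarrow> x - y \<in> Dm m"
  using Dm_iff_mpow_dvd mpow_dvd_diff by blast

lemma inverse_power_le_iff:
  assumes "m \<ge> 2"
  shows "1 / real m ^ j \<le> 1 / real m ^ i \<longleftrightarrow> i \<le> j"
proof
  assume le: "1 / real m ^ j \<le> 1 / real m ^ i"
  show "i \<le> j"
  proof (rule ccontr)
    assume "\<not> i \<le> j"
    then have "1 / real m ^ i < 1 / real m ^ j"
      using assms by (intro divide_strict_left_mono power_strict_increasing) auto
    with le show False by simp
  qed
qed (use assms in \<open>intro divide_left_mono power_increasing, auto\<close>)

lemma mnorm_le_iff_mpow_dvd:
  assumes m: "m \<ge> 2" and x: "x \<in> Dm m"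
  shows "mnorm m x \<le> 1 / real m ^ k \<longleftrightarrow> mpow_dvd m k x"
proof (cases "x = 0")
  case True
  then show ?thesis by (simp add: mnorm_def mpow_dvd_0)
next
  case False
  obtain a b where q: "quotient_of x = (a, b)" by (cases "quotient_of x")
  have "a \<noteq> 0" using False quotient_of_div[OF q] by auto
  define P where "P k \<longleftrightarrow> int m ^ k dvd a" for k
  have bound: "k \<le> nat \<bar>a\<bar>" if "P k" for k
  proof -
    have "int k < 2 ^ k" by (metis less_exp of_nat_less_iff of_nat_numeral of_nat_power)
    also have "\<dots> \<le> int m ^ k" using m by (intro power_mono) auto
    also have "\<dots> \<le> \<bar>a\<bar>" using dvd_imp_le_int[OF \<open>a \<noteq> 0\<close> that[unfolded P_def]] by simp
    finally show ?thesis by linarith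
  qed
  have "P (Greatest P)" by (rule GreatestI_nat[of P 0 "nat \<bar>a\<bar>"]) (auto simp: P_def bound)
  have "mnorm m x = 1 / real m ^ Greatest P"
    using False q unfolding mnorm_def P_def by simp
  then have "mnorm m x \<le> 1 / real m ^ k \<longleftrightarrow> k \<le> Greatest P"
    using inverse_power_le_iff[OF m] by simp
  also have "\<dots> \<longleftrightarrow> P k"
    using Greatest_le_nat[of P k, OF _ bound] \<open>P (Greatest P)\<close> le_imp_power_dvd dvd_trans
    unfolding P_def by blast
  also have "\<dots> \<longleftrightarrow> mpow_dvd m k x"
    using mpow_dvd_iff_numerator[OF q] x q unfolding Dm_def P_def by simp
  finally show ?thesis .
qed

lemma mnorm_nonneg: "mnorm m x \<ge> 0"
  unfolding mnorm_def by simp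

lemma mnorm_0 [simp]: "mnorm m 0 = 0"
  unfolding mnorm_def by simp

lemma mnorm_minus_commute: "mnorm m (a - b) = mnorm m (b - a)"
proof -
  obtain p q where "quotient_of (a - b) = (p, q)" by (cases "quotient_of (a - b)")
  then have "quotient_of (b - a) = (- p, q)"
    by (metis minus_diff_eq rat_uminus_code prod.simps(2))
  with \<open>quotient_of (a - b) = (p, q)\<close> show ?thesis
    unfolding mnorm_def by simp
qed

lemma mnorm_add_le_max:
  assumes m: "m \<ge> 2" and x: "x \<in> Dm m" and y: "y \<in> Dm m"
  shows "mnorm m (x + y) \<le> max (mnorm m x) (mnorm m y)"
proof (cases "x = 0 \<or> y = 0")
  case True
  then show ?thesis by (auto simp: mnorm_def)
next
  case False
  then obtain i j where ij: "mnorm m x = 1 / real m ^ i" "mnorm m y = 1 / real m ^ j"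
    unfolding mnorm_def by auto
  define g where "g = min i j"
  have max_eq: "max (mnorm m x) (mnorm m y) = 1 / real m ^ g"
    using ij inverse_power_le_iff[OF m] unfolding g_def by (auto simp: max_def min_def)
  then have "mnorm m x \<le> 1 / real m ^ g" "mnorm m y \<le> 1 / real m ^ g"
    by (metis max.cobounded1, metis max.cobounded2)
  then have "mpow_dvd m g x" "mpow_dvd m g y"
    using mnorm_le_iff_mpow_dvd[OF m x] mnorm_le_iff_mpow_dvd[OF m y] by blast+
  then have "mpow_dvd m g (x + y)" by (rule mpow_dvd_add)
  then have "mnorm m (x + y) \<le> 1 / real m ^ g"
    using mnorm_le_iff_mpow_dvd[OF m mpow_dvd_Dm[OF \<open>mpow_dvd m g (x + y)\<close>]] by blast
  with max_eq show ?thesis by linarith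
qed

lemma mnorm_diff_le_max:
  assumes "m \<ge> 2" "a \<in> Dm m" "b \<in> Dm m" "c \<in> Dm m"
  shows "mnorm m (a - c) \<le> max (mnorm m (a - b)) (mnorm m (b - c))"
  using mnorm_add_le_max[OF assms(1) Dm_diff[OF assms(2,3)] Dm_diff[OF assms(3,4)]] by simp

lemma abs_mnorm_diff_le:
  assumes "m \<ge> 2" "x \<in> Dm m" "y \<in> Dm m"
  shows "\<bar>mnorm m x - mnorm m y\<bar> \<le> mnorm m (x - y)"
proof -
  have "mnorm m x \<le> max (mnorm m (x - y)) (mnorm m y)"
    using mnorm_add_le_max[OF assms(1) Dm_diff[OF assms(2,3)] assms(3)] by simp
  moreover have "mnorm m y \<le> max (mnorm m (y - x)) (mnorm m x)"
    using mnorm_add_le_max[OF assms(1) Dm_diff[OF assms(3,2)] assms(2)] by simp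
  ultimately show ?thesis
    using mnorm_minus_commute[of m x y] mnorm_nonneg[of m x] mnorm_nonneg[of m y] mnorm_nonneg[of m "y - x"]
    by (auto simp: max_def split: if_splits)
qed

section \<open>Digits\<close>

lemma digit_exists:
  assumes m: "m > 0" and x: "mpow_dvd m 0 x"
  shows "\<exists>c<m. mpow_dvd m 1 (x - of_nat c)"
proof -
  obtain a b where h: "b > 0" "coprime b (int m)" "x = of_int a / of_int b"
    using x unfolding mpow_dvd_def by blast
  obtain u v where "u * b + v * int m = 1"
    using bezout_int[of b "int m"] h(2) by auto
  define c where "c = (a * u) mod int m"
  have c: "0 \<le> c" "c < int m"
    using m unfolding c_def by simp_all
  text \<open>\<open>c\<close> is \<open>a b\<^sup>-\<^sup>1\<close> modulo \<open>m\<close>, since \<open>u\<close> inverts \<open>b\<close> modulo \<open>m\<close>.\<close>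
  have "a - c * b = a * (u * b + v * int m) - c * b"
    using \<open>u * b + v * int m = 1\<close> by simp
  also have "\<dots> = (a * u - c) * b + a * v * int m"
    by (simp add: algebra_simps)
  finally have "a - c * b = (a * u - c) * b + a * v * int m" .
  moreover have "int m dvd a * u - c"
    unfolding c_def by (simp add: mod_eq_dvd_iff)
  ultimately have "int m dvd a - c * b"
    by simp
  moreover have "x - of_nat (nat c) = of_int (a - c * b) / of_int b"
    using h(1,3) c by (simp add: field_simps)
  ultimately have "mpow_dvd m 1 (x - of_nat (nat c))"
    unfolding mpow_dvd_def using h(1,2) by (intro exI[of _ "a - c * b"] exI[of _ b]) simp
  with c show ?thesis
    by (intro exI[of _ "nat c"]) auto
qed

definition digit :: "nat \<Rightarrow> rat \<Rightarrow> nat" where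
  "digit m x = (SOME c. c < m \<and> mpow_dvd m 1 (x - of_nat c))"

text \<open>\<open>x = digit m x + ratio m * shift m x\<close>, so \<open>digit m ((shift m ^^ i) x)\<close> is the \<open>i\<close>-th digit of \<open>x\<close>.\<close>
definition shift :: "nat \<Rightarrow> rat \<Rightarrow> rat" where
  "shift m x = (x - of_nat (digit m x)) / ratio m"

lemma
  assumes "m > 0" "mpow_dvd m 0 x"
  shows digit_less: "digit m x < m"
    and mpow_dvd_sub_digit: "mpow_dvd m 1 (x - of_nat (digit m x))"
  using someI_ex[OF digit_exists[OF assms]] unfolding digit_def by auto

lemma digit_unique:
  assumes "c < m" "c' < m" "mpow_dvd m 1 (x - of_nat c)" "mpow_dvd m 1 (x - of_nat c')"
  shows "c = c'"
proof -
  have "(x - of_nat c) - (x - of_nat c') = of_int (int c' - int c)"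
    by simp
  then have "mpow_dvd m 1 (of_int (int c' - int c))"
    using mpow_dvd_diff[OF assms(3,4)] by metis
  then have "int m dvd int c' - int c"
    by (simp only: mpow_dvd_of_int_iff power_one_right)
  moreover have "\<bar>int c' - int c\<bar> < int m"
    using assms(1,2) by linarith
  ultimately have "int c' - int c = 0"
    using dvd_imp_le_int[of "int c' - int c" "int m"] by fastforce
  then show ?thesis by simp
qed

lemma digit_eqI:
  assumes "m > 0" "c < m" "mpow_dvd m 1 (x - of_nat c)"
  shows "digit m x = c"
proof -
  have "mpow_dvd m 0 x"
    using mpow_dvd_add[OF mpow_dvd_mono[OF assms(3)] mpow_dvd_of_nat[of m c]] by simp
  with assms(1) have "digit m x < m" "mpow_dvd m 1 (x - of_nat (digit m x))"
    by (rule digit_less, rule mpow_dvd_sub_digit)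
  then show ?thesis
    using digit_unique[OF _ assms(2) _ assms(3)] by blast
qed

lemma digit_eq_if_mpow_dvd_diff:
  assumes "m > 0" "mpow_dvd m 0 y" "mpow_dvd m 1 (x - y)"
  shows "digit m x = digit m y"
  using digit_eqI[OF assms(1) digit_less[OF assms(1,2)]]
    mpow_dvd_add[OF assms(3) mpow_dvd_sub_digit[OF assms(1,2)]] by simp

lemma mpow_dvd_shift:
  assumes "m > 0" "mpow_dvd m 0 x"
  shows "mpow_dvd m 0 (shift m x)"
proof -
  have eq: "shift m x = (x - of_nat (digit m x)) / of_nat m * of_nat (m + 1)"
    unfolding shift_def by (simp add: field_simps)
  show ?thesis
    unfolding eq
    using mpow_dvd_mult[OF mpow_dvd_divide_m[OF assms(1) mpow_dvd_sub_digit[OF assms, unfolded One_nat_def]]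
        mpow_dvd_of_nat[of m "m + 1"]]
    by simp
qed

lemma mpow_dvd_shift_iterate: "m > 0 \<Longrightarrow> mpow_dvd m 0 x \<Longrightarrow> mpow_dvd m 0 ((shift m ^^ i) x)"
  by (induction i) (auto intro: mpow_dvd_shift)

lemma digit_add_shift: "m > 0 \<Longrightarrow> x = of_nat (digit m x) + ratio m * shift m x"
  by (simp add: shift_def)

lemma digit_shift_of_digit_expansion:
  assumes "m > 0" "c < m" "mpow_dvd m 0 y"
  shows "digit m (of_nat c + ratio m * y) = c" "shift m (of_nat c + ratio m * y) = y"
proof -
  have "mpow_dvd m (1 + 0) (ratio m * y)"
    using mpow_dvd_mult[OF mpow_dvd_ratio_power[of m 1] assms(3)] by simp
  then show "digit m (of_nat c + ratio m * y) = c"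
    using digit_eqI[OF assms(1,2)] by simp
  then show "shift m (of_nat c + ratio m * y) = y"
    using assms(1) by (simp add: shift_def)
qed

lemma funpow_expansion:
  fixes r :: "'a :: comm_ring_1"
  assumes "\<And>y. y = d y + r * T y"
  shows "x = (\<Sum>i<n. r ^ i * d ((T ^^ i) x)) + r ^ n * (T ^^ n) x"
proof (induction n)
  case (Suc n)
  have "r ^ n * (T ^^ n) x = r ^ n * d ((T ^^ n) x) + r ^ Suc n * (T ^^ Suc n) x"
    by (subst assms) (simp add: algebra_simps)
  with Suc show ?case by (simp add: add.assoc)
qed simp

lemma mpow_dvd_digit_expansion_remainder:
  assumes "m > 0" "mpow_dvd m 0 x"
  shows "mpow_dvd m n (x - (\<Sum>i<n. ratio m ^ i * of_nat (digit m ((shift m ^^ i) x))))"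
proof -
  have "x - (\<Sum>i<n. ratio m ^ i * of_nat (digit m ((shift m ^^ i) x))) = ratio m ^ n * (shift m ^^ n) x"
    using funpow_expansion[of "\<lambda>y. of_nat (digit m y)" "ratio m" "shift m", OF digit_add_shift[OF assms(1)]]
    by (simp add: algebra_simps)
  then show ?thesis
    using mpow_dvd_mult[OF mpow_dvd_ratio_power mpow_dvd_shift_iterate[OF assms]] by simp
qed

lemma mpow_dvd_shift_diff:
  assumes m: "m > 0" and x: "mpow_dvd m 0 x" and y: "mpow_dvd m 0 y"
    and xy: "mpow_dvd m (Suc n) (x - y)"
  shows "mpow_dvd m n (shift m x - shift m y)"
proof -
  have "digit m x = digit m y"
    using digit_eq_if_mpow_dvd_diff[OF m y mpow_dvd_mono[OF xy]] by simp
  then have eq: "shift m x - shift m y = (x - y) / of_nat m * of_nat (m + 1)"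
    using m unfolding shift_def by (simp add: field_simps)
  show ?thesis
    unfolding eq using mpow_dvd_mult[OF mpow_dvd_divide_m[OF m xy] mpow_dvd_of_nat[of m "m + 1"]] by simp
qed

lemma digit_shift_iterate_eq:
  assumes "m > 0" "mpow_dvd m 0 x" "mpow_dvd m 0 y" "mpow_dvd m n (x - y)" "i < n"
  shows "digit m ((shift m ^^ i) x) = digit m ((shift m ^^ i) y)"
  using assms(2-)
proof (induction i arbitrary: x y n)
  case 0
  then show ?case
    using digit_eq_if_mpow_dvd_diff[OF assms(1)] mpow_dvd_mono by (metis One_nat_def Suc_leI funpow_0)
next
  case (Suc i)
  then obtain n' where "n = Suc n'" "i < n'"
    by (cases n) auto
  with Suc.prems have "mpow_dvd m n' (shift m x - shift m y)"
    using mpow_dvd_shift_diff[OF assms(1)] by blast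
  then show ?case
    unfolding funpow_Suc_right comp_def
    using Suc.IH mpow_dvd_shift[OF assms(1)] Suc.prems(1,2) \<open>i < n'\<close> by blast
qed

section \<open>The completion\<close>

definition Qm_rep :: "(nat \<Rightarrow> rat) set \<Rightarrow> nat \<Rightarrow> rat" where
  "Qm_rep a = (SOME X. X \<in> a)"

lemma Qm_dist_eq_lim: "Qm_dist m a b = lim (\<lambda>n. mnorm m (Qm_rep a n - Qm_rep b n))"
  unfolding Qm_dist_def Qm_rep_def ..

lemma mcauchy_Qm_rep:
  assumes "q \<in> Qm m"
  shows "mcauchy m (Qm_rep q)"
proof -
  obtain X where X: "mcauchy m X" "q = Qm_class m X"
    using assms unfolding Qm_def by blast
  then have "X \<in> q"
    unfolding Qm_class_def by simp
  then have "Qm_rep q \<in> q"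
    unfolding Qm_rep_def some_in_eq by blast
  with X(2) show ?thesis
    unfolding Qm_class_def by simp
qed

lemma Qm_rep_Qm_of:
  assumes "c \<in> Dm m"
  shows "mcauchy m (Qm_rep (Qm_of m c))" "(\<lambda>j. mnorm m (c - Qm_rep (Qm_of m c) j)) \<longlonglongrightarrow> 0"
proof -
  have "(\<lambda>_. c) \<in> Qm_of m c"
    using assms unfolding Qm_of_def Qm_class_def mcauchy_def by simp
  then have "Qm_rep (Qm_of m c) \<in> Qm_of m c"
    unfolding Qm_rep_def some_in_eq by blast
  then show "mcauchy m (Qm_rep (Qm_of m c))" "(\<lambda>j. mnorm m (c - Qm_rep (Qm_of m c) j)) \<longlonglongrightarrow> 0"
    unfolding Qm_of_def Qm_class_def by auto
qed

lemma convergent_mnorm_diff: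
  assumes m: "m \<ge> 2" and A: "mcauchy m A" and B: "mcauchy m B"
  shows "convergent (\<lambda>j. mnorm m (A j - B j))"
proof -
  have D: "A j \<in> Dm m" "B j \<in> Dm m" for j
    using A B unfolding mcauchy_def by blast+
  have "Cauchy (\<lambda>j. mnorm m (A j - B j))"
  proof (rule CauchyI)
    fix e :: real
    assume "e > 0"
    then obtain N1 N2 where
      N1: "\<forall>i\<ge>N1. \<forall>j\<ge>N1. mnorm m (A i - A j) < e" and
      N2: "\<forall>i\<ge>N2. \<forall>j\<ge>N2. mnorm m (B i - B j) < e"
      using A B unfolding mcauchy_def by blast
    have "norm (mnorm m (A i - B i) - mnorm m (A j - B j)) < e" if "i \<ge> max N1 N2" "j \<ge> max N1 N2" for i j
    proof -
      have "norm (mnorm m (A i - B i) - mnorm m (A j - B j)) \<le> mnorm m ((A i - A j) + (B j - B i))"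
        using abs_mnorm_diff_le[OF m Dm_diff[OF D(1) D(2)] Dm_diff[OF D(1) D(2)], of i i j j]
        by (simp add: algebra_simps)
      also have "\<dots> \<le> max (mnorm m (A i - A j)) (mnorm m (B j - B i))"
        by (intro mnorm_add_le_max[OF m] Dm_diff D)
      also have "\<dots> < e"
        using N1 N2 that by simp
      finally show ?thesis .
    qed
    then show "\<exists>N. \<forall>i\<ge>N. \<forall>j\<ge>N. norm (mnorm m (A i - B i) - mnorm m (A j - B j)) < e"
      by blast
  qed
  then show ?thesis
    by (simp add: Cauchy_convergent_iff)
qed

lemma tendsto_Qm_dist_Qm_of:
  assumes m: "m \<ge> 2" and c: "c \<in> Dm m" and q: "q \<in> Qm m"
  shows "(\<lambda>j. mnorm m (c - Qm_rep q j)) \<longlonglongrightarrow> Qm_dist m (Qm_of m c) q"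
proof -
  let ?Z = "Qm_rep (Qm_of m c)" and ?Y = "Qm_rep q"
  note Z = Qm_rep_Qm_of[OF c]
  have Y: "mcauchy m ?Y"
    using mcauchy_Qm_rep[OF q] .
  have lim: "(\<lambda>j. mnorm m (?Z j - ?Y j)) \<longlonglongrightarrow> Qm_dist m (Qm_of m c) q"
    using convergent_mnorm_diff[OF m Z(1) Y] unfolding Qm_dist_eq_lim
    by (simp add: convergent_LIMSEQ_iff)
  have D: "c - ?Y j \<in> Dm m" "?Z j - ?Y j \<in> Dm m" for j
    using c Z(1) Y Dm_diff unfolding mcauchy_def by simp_all
  have bound: "\<bar>mnorm m (c - ?Y j) - mnorm m (?Z j - ?Y j)\<bar> \<le> mnorm m (c - ?Z j)" for j
    using abs_mnorm_diff_le[OF m D(1)[of j] D(2)[of j]] by simp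
  have lower: "(\<lambda>j. mnorm m (?Z j - ?Y j) - mnorm m (c - ?Z j)) \<longlonglongrightarrow> Qm_dist m (Qm_of m c) q"
    using tendsto_diff[OF lim Z(2)] by simp
  have upper: "(\<lambda>j. mnorm m (?Z j - ?Y j) + mnorm m (c - ?Z j)) \<longlonglongrightarrow> Qm_dist m (Qm_of m c) q"
    using tendsto_add[OF lim Z(2)] by simp
  have "mnorm m (?Z j - ?Y j) - mnorm m (c - ?Z j) \<le> mnorm m (c - ?Y j)"
    "mnorm m (c - ?Y j) \<le> mnorm m (?Z j - ?Y j) + mnorm m (c - ?Z j)" for j
    using bound[of j] unfolding abs_le_iff by linarith+
  then show ?thesis
    by (intro tendsto_sandwich[OF always_eventually always_eventually lower upper] allI)
qed

lemma Qm_dist_Qm_of_nonneg: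
  assumes "m \<ge> 2" "c \<in> Dm m" "q \<in> Qm m"
  shows "Qm_dist m (Qm_of m c) q \<ge> 0"
  by (rule tendsto_lowerbound[OF tendsto_Qm_dist_Qm_of[OF assms]]) (simp_all add: mnorm_nonneg)

lemma mnorm_diff_le_max_Qm_dist:
  assumes m: "m \<ge> 2" and "c \<in> Dm m" "d \<in> Dm m" "q \<in> Qm m"
  shows "mnorm m (c - d) \<le> max (Qm_dist m (Qm_of m c) q) (Qm_dist m (Qm_of m d) q)"
proof (rule tendsto_lowerbound)
  let ?Y = "Qm_rep q"
  show "(\<lambda>j. max (mnorm m (c - ?Y j)) (mnorm m (d - ?Y j)))
    \<longlonglongrightarrow> max (Qm_dist m (Qm_of m c) q) (Qm_dist m (Qm_of m d) q)"
    using assms by (intro tendsto_max tendsto_Qm_dist_Qm_of)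
  have "?Y j \<in> Dm m" for j
    using mcauchy_Qm_rep[OF assms(4)] unfolding mcauchy_def by blast
  then show "\<forall>\<^sub>F j in sequentially. mnorm m (c - d) \<le> max (mnorm m (c - ?Y j)) (mnorm m (d - ?Y j))"
    using mnorm_diff_le_max[OF m assms(2) _ assms(3)] mnorm_minus_commute[of m d]
    by (intro always_eventually allI) simp
qed simp

section \<open>Digit series\<close>

abbreviation digit_series :: "nat \<Rightarrow> (nat \<Rightarrow> nat) \<Rightarrow> nat \<Rightarrow> rat" where
  "digit_series m s n \<equiv> \<Sum>k<n. ratio m ^ k * of_nat (s k)"

lemma mpow_dvd_digit_series: "mpow_dvd m 0 (digit_series m s n)"
  by (intro mpow_dvd_sum mpow_dvd_mult[of m 0 _ 0, simplified] mpow_dvd_of_nat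
      mpow_dvd_mono[OF mpow_dvd_ratio_power]) simp

lemma digit_series_in_Dm: "digit_series m s n \<in> Dm m"
  using mpow_dvd_Dm[OF mpow_dvd_digit_series] .

lemma digit_series_Suc:
  "digit_series m s (Suc n) = of_nat (s 0) + ratio m * digit_series m (\<lambda>k. s (Suc k)) n"
  unfolding sum.lessThan_Suc_shift power_Suc sum_distrib_left mult.assoc by simp

lemma digit_shift_iterate_digit_series:
  assumes "m > 0" "\<forall>k. s k < m" "i < n"
  shows "digit m ((shift m ^^ i) (digit_series m s n)) = s i"
  using assms(2,3)
proof (induction i arbitrary: s n)
  case 0
  then obtain n' where "n = Suc n'"
    by (cases n) auto
  then have "digit m (digit_series m s n) = s 0"
    unfolding \<open>n = Suc n'\<close> digit_series_Suc
    by (rule_tac digit_shift_of_digit_expansion(1)[OF assms(1) _ mpow_dvd_digit_series]) (use 0 in simp)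
  then show ?case by simp
next
  case (Suc i)
  then obtain n' where n': "n = Suc n'" "i < n'"
    by (cases n) auto
  then have "shift m (digit_series m s n) = digit_series m (\<lambda>k. s (Suc k)) n'"
    unfolding n'(1) digit_series_Suc
    by (rule_tac digit_shift_of_digit_expansion(2)[OF assms(1) _ mpow_dvd_digit_series]) (use Suc in simp)
  then show ?case
    unfolding funpow_Suc_right comp_def using Suc.prems(1) n'(2) by (simp add: Suc.IH)
qed

lemma mcauchy_eventually_mpow_dvd:
  assumes m: "m \<ge> 2" and Y: "mcauchy m Y"
  shows "\<exists>N. \<forall>j\<ge>N. \<forall>l\<ge>N. mpow_dvd m k (Y j - Y l)"
proof -
  have "(0::real) < 1 / real m ^ k"
    using m by simp
  then obtain N where N: "\<forall>j\<ge>N. \<forall>l\<ge>N. mnorm m (Y j - Y l) < 1 / real m ^ k"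
    using Y unfolding mcauchy_def by blast
  have "mpow_dvd m k (Y j - Y l)" if "j \<ge> N" "l \<ge> N" for j l
  proof -
    have "Y j - Y l \<in> Dm m"
      using Y Dm_diff unfolding mcauchy_def by blast
    moreover have "mnorm m (Y j - Y l) \<le> 1 / real m ^ k"
      using N that by (simp add: less_imp_le)
    ultimately show ?thesis
      by (simp add: mnorm_le_iff_mpow_dvd[OF m])
  qed
  then show ?thesis by blast
qed

lemma mcauchy_digits_eventually_const:
  assumes m: "m \<ge> 2" and Y: "mcauchy m Y"
  obtains s where "\<forall>k. s k < m" "\<And>k. \<forall>\<^sub>F j in sequentially. digit m ((shift m ^^ k) (Y j)) = s k"
proof -
  have m0: "m > 0" using m by simp
  have Y0: "mpow_dvd m 0 (Y j)" for j
    using Y unfolding mcauchy_def Dm_iff_mpow_dvd by blast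
  have "\<forall>k. \<exists>N. \<forall>j\<ge>N. \<forall>l\<ge>N. mpow_dvd m k (Y j - Y l)"
    using mcauchy_eventually_mpow_dvd[OF m Y] by blast
  then obtain N where N: "\<forall>k. \<forall>j\<ge>N k. \<forall>l\<ge>N k. mpow_dvd m k (Y j - Y l)"
    unfolding choice_iff by blast
  define s where "s k = digit m ((shift m ^^ k) (Y (N (Suc k))))" for k
  have "s k < m" for k
    unfolding s_def using digit_less[OF m0 mpow_dvd_shift_iterate[OF m0 Y0]] .
  moreover have "digit m ((shift m ^^ k) (Y j)) = s k" if "j \<ge> N (Suc k)" for k j
  proof -
    have "mpow_dvd m (Suc k) (Y j - Y (N (Suc k)))"
      using N that by blast
    then show ?thesis
      unfolding s_def by (rule digit_shift_iterate_eq[OF m0 Y0 Y0 _ lessI])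
  qed
  then have "\<forall>\<^sub>F j in sequentially. digit m ((shift m ^^ k) (Y j)) = s k" for k
    by (rule eventually_sequentiallyI)
  ultimately show thesis
    using that by blast
qed

lemma digit_series_exists:
  assumes m: "m \<ge> 2" and q: "q \<in> Qm m"
  shows "\<exists>s. (\<forall>k. s k < m) \<and> (\<lambda>n. Qm_dist m (Qm_of m (digit_series m s n)) q) \<longlonglongrightarrow> 0"
proof -
  have m0: "m > 0" using m by simp
  define Y where "Y = Qm_rep q"
  have Y: "mcauchy m Y"
    unfolding Y_def using mcauchy_Qm_rep[OF q] .
  have Y0: "mpow_dvd m 0 (Y j)" for j
    using Y unfolding mcauchy_def Dm_iff_mpow_dvd by blast
  obtain s where s_less: "\<forall>k. s k < m"
    and digits_Y: "\<And>k. \<forall>\<^sub>F j in sequentially. digit m ((shift m ^^ k) (Y j)) = s k"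
    using mcauchy_digits_eventually_const[OF m Y] by blast
  have close: "Qm_dist m (Qm_of m (digit_series m s n)) q \<le> 1 / real m ^ n" for n
  proof (rule tendsto_upperbound[OF tendsto_Qm_dist_Qm_of[OF m digit_series_in_Dm q]])
    have "\<forall>\<^sub>F j in sequentially. \<forall>k\<in>{..<n}. digit m ((shift m ^^ k) (Y j)) = s k"
      using digits_Y by (intro eventually_ball_finite) auto
    then show "\<forall>\<^sub>F j in sequentially. mnorm m (digit_series m s n - Qm_rep q j) \<le> 1 / real m ^ n"
    proof eventually_elim
      case (elim j)
      have "(\<Sum>k<n. ratio m ^ k * of_nat (digit m ((shift m ^^ k) (Y j)))) = digit_series m s n"
        using elim by (intro sum.cong) auto
      then have "mpow_dvd m n (Y j - digit_series m s n)"
        using mpow_dvd_digit_expansion_remainder[OF m0 Y0[of j], of n] by simp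
      then have dvd: "mpow_dvd m n (digit_series m s n - Y j)"
        using mpow_dvd_uminus[of m n "Y j - digit_series m s n"] by simp
      then have "mnorm m (digit_series m s n - Y j) \<le> 1 / real m ^ n"
        using mnorm_le_iff_mpow_dvd[OF m mpow_dvd_Dm[OF dvd]] by blast
      then show ?case
        by (simp add: Y_def)
    qed
  qed simp
  have lim: "(\<lambda>n. 1 / real m ^ n) \<longlonglongrightarrow> 0"
    by (rule LIMSEQ_divide_realpow_zero) (use m in simp)
  have "(\<lambda>n. Qm_dist m (Qm_of m (digit_series m s n)) q) \<longlonglongrightarrow> 0"
    by (rule tendsto_sandwich[OF always_eventually always_eventually tendsto_const lim])
      (use close Qm_dist_Qm_of_nonneg[OF m digit_series_in_Dm q] in auto)
  with s_less show ?thesis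
    by blast
qed

lemma digit_series_unique:
  assumes m: "m \<ge> 2" and q: "q \<in> Qm m"
    and s: "\<forall>k. s k < m" "(\<lambda>n. Qm_dist m (Qm_of m (digit_series m s n)) q) \<longlonglongrightarrow> 0"
    and t: "\<forall>k. t k < m" "(\<lambda>n. Qm_dist m (Qm_of m (digit_series m t n)) q) \<longlonglongrightarrow> 0"
  shows "s = t"
proof
  fix k
  have m0: "m > 0" using m by simp
  let ?d = "\<lambda>n. max (Qm_dist m (Qm_of m (digit_series m s n)) q) (Qm_dist m (Qm_of m (digit_series m t n)) q)"
  have "?d \<longlonglongrightarrow> 0"
    using tendsto_max[OF s(2) t(2)] by simp
  moreover have "(0::real) < 1 / real m ^ Suc k"
    using m by simp
  ultimately have "\<forall>\<^sub>F n in sequentially. ?d n < 1 / real m ^ Suc k"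
    by (rule order_tendstoD(2))
  then obtain N where "\<forall>n\<ge>N. ?d n < 1 / real m ^ Suc k"
    unfolding eventually_sequentially by blast
  then obtain n where n: "n > k" "?d n < 1 / real m ^ Suc k"
    by (metis le_add1 le_add2 less_Suc_eq_le add_Suc_right)
  have "mnorm m (digit_series m s n - digit_series m t n) \<le> 1 / real m ^ Suc k"
    using mnorm_diff_le_max_Qm_dist[OF m digit_series_in_Dm digit_series_in_Dm q, of s n t n] n(2)
    by linarith
  moreover have D: "digit_series m s n - digit_series m t n \<in> Dm m"
    by (rule Dm_diff[OF digit_series_in_Dm digit_series_in_Dm])
  ultimately have "mpow_dvd m (Suc k) (digit_series m s n - digit_series m t n)"
    using mnorm_le_iff_mpow_dvd[OF m D] by blast
  then have "digit m ((shift m ^^ k) (digit_series m s n)) = digit m ((shift m ^^ k) (digit_series m t n))"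
    by (rule digit_shift_iterate_eq[OF m0 mpow_dvd_digit_series mpow_dvd_digit_series _ lessI])
  then show "s k = t k"
    using digit_shift_iterate_digit_series[OF m0 s(1) n(1)] digit_shift_iterate_digit_series[OF m0 t(1) n(1)]
    by simp
qed

theorem mainTheorem11:
  fixes m :: nat and q :: "(nat \<Rightarrow> rat) set"
  assumes "m \<ge> 2" and "q \<in> Qm m"
  shows "\<exists>!s :: nat \<Rightarrow> nat. (\<forall>k. s k < m) \<and>
    (\<lambda>n. Qm_dist m (Qm_of m (\<Sum>k<n. (of_nat m / (of_nat m + 1)) ^ k * of_nat (s k))) q)
      \<longlonglongrightarrow> 0"
  using digit_series_exists[OF assms] digit_series_unique[OF assms] by blast

end
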